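(* For every finite simple graph $G$ and every weight function $w:V(G)\to\mathbb{R}$, if $G$ is $w$-well-dominated then $G$ is $w$-well-covered. Equivalently, $WWD(G)$ is a subspace of $WCW(G)$.
   Context: For $w:V(G)\to\mathbb{R}$ and $S\subseteq V(G)$, $w(S)=\sum_{s\in S}w(s)$. A dominating set is a set $S$ with every vertex in $S$ or adjacent to a vertex of $S$; it is minimal if no proper subset is dominating. $G$ is $w$-well-dominated if all minimal dominating sets have the same weight; $G$ is $w$-well-covered if all maximal (by inclusion) independent sets have the same weight. $WWD(G)$ denotes the set of all $w$ for which $G$ is $w$-well-dominated, and $WCW(G)$ the set of all $w$ for which $G$ is $w$-well-covered (both are vector spaces of functions $V(G)\to\mathbb{R}$). *)

theory Defs
  imports Complex_Main "HOL-Library.FuncSet"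
begin

definition simple_graph :: "'a set \<Rightarrow> ('a \<Rightarrow> 'a \<Rightarrow> bool) \<Rightarrow> bool" where
  "simple_graph V E \<longleftrightarrow> finite V \<and> (\<forall>u v. E u v \<longrightarrow> u \<in> V \<and> v \<in> V)
     \<and> (\<forall>u v. E u v \<longrightarrow> E v u) \<and> (\<forall>v. \<not> E v v)"

definition dominating :: "'a set \<Rightarrow> ('a \<Rightarrow> 'a \<Rightarrow> bool) \<Rightarrow> 'a set \<Rightarrow> bool" where
  "dominating V E S \<longleftrightarrow> S \<subseteq> V \<and> (\<forall>v\<in>V. v \<in> S \<or> (\<exists>s\<in>S. E v s))"

definition minimal_dominating :: "'a set \<Rightarrow> ('a \<Rightarrow> 'a \<Rightarrow> bool) \<Rightarrow> 'a set \<Rightarrow> bool" where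
  "minimal_dominating V E S \<longleftrightarrow> dominating V E S \<and> (\<forall>T. T \<subset> S \<longrightarrow> \<not> dominating V E T)"

definition independent :: "'a set \<Rightarrow> ('a \<Rightarrow> 'a \<Rightarrow> bool) \<Rightarrow> 'a set \<Rightarrow> bool" where
  "independent V E S \<longleftrightarrow> S \<subseteq> V \<and> (\<forall>u\<in>S. \<forall>v\<in>S. \<not> E u v)"

definition maximal_independent :: "'a set \<Rightarrow> ('a \<Rightarrow> 'a \<Rightarrow> bool) \<Rightarrow> 'a set \<Rightarrow> bool" where
  "maximal_independent V E S \<longleftrightarrow> independent V E S \<and> (\<forall>T. S \<subset> T \<longrightarrow> \<not> independent V E T)"

definition w_well_dominated :: "'a set \<Rightarrow> ('a \<Rightarrow> 'a \<Rightarrow> bool) \<Rightarrow> ('a \<Rightarrow> real) \<Rightarrow> bool" where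
  "w_well_dominated V E w \<longleftrightarrow> (\<forall>S T. minimal_dominating V E S \<longrightarrow> minimal_dominating V E T
      \<longrightarrow> sum w S = sum w T)"

definition w_well_covered :: "'a set \<Rightarrow> ('a \<Rightarrow> 'a \<Rightarrow> bool) \<Rightarrow> ('a \<Rightarrow> real) \<Rightarrow> bool" where
  "w_well_covered V E w \<longleftrightarrow> (\<forall>S T. maximal_independent V E S \<longrightarrow> maximal_independent V E T
      \<longrightarrow> sum w S = sum w T)"

definition WWD :: "'a set \<Rightarrow> ('a \<Rightarrow> 'a \<Rightarrow> bool) \<Rightarrow> ('a \<Rightarrow> real) set" where
  "WWD V E = {w \<in> V \<rightarrow>\<^sub>E UNIV. w_well_dominated V E w}"

definition WCW :: "'a set \<Rightarrow> ('a \<Rightarrow> 'a \<Rightarrow> bool) \<Rightarrow> ('a \<Rightarrow> real) set" where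
  "WCW V E = {w \<in> V \<rightarrow>\<^sub>E UNIV. w_well_covered V E w}"

end

theory Submission
  imports Defs
begin

text \<open>
  Every maximal independent set of a graph is a minimal dominating set.
  Hence, if all minimal dominating sets have the same weight, then in
  particular all maximal independent sets have the same weight, i.e. a
  w-well-dominated graph is w-well-covered.
\<close>

text \<open>An independent dominating set is minimal dominating: a vertex removed
  from it is adjacent to nothing left in it, so it is no longer dominated.\<close>
lemma independent_dominating_imp_minimal_dominating:
  assumes ind: "independent V E S" and dom: "dominating V E S"
  shows "minimal_dominating V E S"
proof -
  have "\<not> dominating V E T" if T: "T \<subset> S" for T
  proof
    assume dom_T: "dominating V E T"
    obtain s where s: "s \<in> S" "s \<notin> T" using T by blast
    then have "s \<in> V" using ind unfolding independent_def by blast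
    then obtain t where "t \<in> T" "E s t" using dom_T s unfolding dominating_def by blast
    then show False using ind s T unfolding independent_def by blast
  qed
  then show ?thesis using dom unfolding minimal_dominating_def by blast
qed

text \<open>In a symmetric, loopless relation a maximal independent set is
  dominating: a vertex outside it with no neighbour in it could be added
  without destroying independence.\<close>
lemma maximal_independent_imp_dominating:
  assumes sym: "\<And>u v. E u v \<Longrightarrow> E v u" and loopless: "\<And>v. \<not> E v v"
    and max: "maximal_independent V E S"
  shows "dominating V E S"
proof -
  have ind: "independent V E S" and no_larger: "\<And>T. S \<subset> T \<Longrightarrow> \<not> independent V E T"
    using max unfolding maximal_independent_def by auto
  have "v \<in> S \<or> (\<exists>s\<in>S. E v s)" if v: "v \<in> V" for v
  proof (rule ccontr)
    assume undominated: "\<not> (v \<in> S \<or> (\<exists>s\<in>S. E v s))"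
    have "independent V E (insert v S)"
      using ind v undominated sym loopless unfolding independent_def by blast
    moreover have "S \<subset> insert v S" using undominated by blast
    ultimately show False using no_larger by blast
  qed
  moreover have "S \<subseteq> V" using ind unfolding independent_def by blast
  ultimately show ?thesis unfolding dominating_def by blast
qed

lemma maximal_independent_imp_minimal_dominating:
  assumes "simple_graph V E" and "maximal_independent V E S"
  shows "minimal_dominating V E S"
proof (rule independent_dominating_imp_minimal_dominating)
  show "independent V E S" using assms(2) unfolding maximal_independent_def by blast
  show "dominating V E S"
    using assms by (intro maximal_independent_imp_dominating) (auto simp: simple_graph_def)
qed

theorem mainTheorem3:
  fixes V :: "'a set" and E :: "'a \<Rightarrow> 'a \<Rightarrow> bool" and w :: "'a \<Rightarrow> real"
  assumes "simple_graph V E"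
    and "w_well_dominated V E w"
  shows "w_well_covered V E w"
  unfolding w_well_covered_def
proof (intro allI impI)
  fix S T assume "maximal_independent V E S" "maximal_independent V E T"
  then have "minimal_dominating V E S" "minimal_dominating V E T"
    using assms(1) maximal_independent_imp_minimal_dominating by blast+
  then show "sum w S = sum w T"
    using assms(2) unfolding w_well_dominated_def by blast
qed

end
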